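(* For all $a,b>0$, $G(a,b)\le\lambda_s(a,b)\le L(a,b)$ whenever $-1/2\le s\le 0$. These bounds are best possible: the inequality $G(a,b)\le \lambda_s(a,b)$ holds for all $a,b>0$ if and only if $s\ge -1/2$, and the inequality $\lambda_s(a,b)\le L(a,b)$ holds for all $a,b>0$ if and only if $s\le 0$.
   Context: For $a,b>0$ with $a\neq b$ define $$\lambda_s(a,b)=\begin{cases}\dfrac{s-1}{s+1}\cdot\dfrac{a^{s+1}+b^{s+1}-2\left(\frac{a+b}{2}\right)^{s+1}}{a^s+b^s-2\left(\frac{a+b}{2}\right)^s}, & s\in\mathbb{R}\setminus\{-1,0,1\},\\[3mm] \dfrac{2\log\frac{a+b}{2}-\log a-\log b}{\frac{1}{2a}+\frac{1}{2b}-\frac{2}{a+b}}, & s=-1,\\[3mm] \dfrac{a\log a+b\log b-(a+b)\log\frac{a+b}{2}}{2\log\frac{a+b}{2}-\log a-\log b}, & s=0,\\[3mm] \dfrac{(b-a)^2}{4\left(a\log a+b\log b-(a+b)\log\frac{a+b}{2}\right)}, & s=1,\end{cases}$$ and $\lambda_s(a,a)=a$. The geometric mean is $G(a,b)=\sqrt{ab}$ and the logarithmic mean is $L(a,b)=\frac{b-a}{\log b-\log a}$ for $a\ne b$, $L(a,a)=a$. *)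

theory Defs
  imports Complex_Main
begin

definition lam :: "real \<Rightarrow> real \<Rightarrow> real \<Rightarrow> real" where
  "lam s a b =
    (if a = b then a
     else if s = -1 then
       (2 * ln ((a+b)/2) - ln a - ln b) / (1/(2*a) + 1/(2*b) - 2/(a+b))
     else if s = 0 then
       (a * ln a + b * ln b - (a+b) * ln ((a+b)/2)) / (2 * ln ((a+b)/2) - ln a - ln b)
     else if s = 1 then
       (b - a)^2 / (4 * (a * ln a + b * ln b - (a+b) * ln ((a+b)/2)))
     else
       (s - 1) / (s + 1) *
       ((a powr (s+1) + b powr (s+1) - 2 * ((a+b)/2) powr (s+1)) /
        (a powr s + b powr s - 2 * ((a+b)/2) powr s)))"

definition G :: "real \<Rightarrow> real \<Rightarrow> real" where
  "G a b = sqrt (a * b)"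

definition L :: "real \<Rightarrow> real \<Rightarrow> real" where
  "L a b = (if a = b then a else (b - a) / (ln b - ln a))"

end

theory Submission
  imports Defs "HOL-Real_Asymp.Real_Asymp"
begin

text \<open>
  For \<open>a \<noteq> b\<close>, \<open>lam s a b\<close> is the quotient \<open>I (s - 1) / I (s - 2)\<close> of the Jensen gaps
  \<open>I q = F a + F b - 2 F ((a + b) / 2)\<close> of second antiderivatives \<open>F\<close> of \<open>x powr q\<close>.
  The gaps are log-convex in \<open>q\<close>, so \<open>lam s a b\<close> is nondecreasing in \<open>s\<close> and the bounds
  reduce to the endpoints. \<open>G \<le> lam (-1/2)\<close> is an algebraic inequality between \<open>sqrt a\<close>,
  \<open>sqrt b\<close> and \<open>sqrt ((a + b) / 2)\<close>. Writing \<open>a = g e\<^sup>-\<^sup>y\<close>, \<open>b = g e\<^sup>y\<close>, the bound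
  \<open>lam 0 \<le> L\<close> becomes \<open>y\<^sup>2 sinh y \<le> ln (cosh y) (sinh y + y cosh y)\<close>, which follows from
  Lazarevic's inequality \<open>y\<^sup>3 cosh y \<le> sinh\<^sup>3 y\<close>.
  Sharpness is seen at \<open>b = 1\<close>, \<open>a \<rightarrow> 0\<close>: there \<open>lam s a 1 = o(sqrt a)\<close> for \<open>s < -1/2\<close>,
  while for \<open>s > 0\<close> it tends to a positive limit and \<open>L a 1 \<rightarrow> 0\<close>.
\<close>

definition jensen_gap :: "(real \<Rightarrow> real) \<Rightarrow> real \<Rightarrow> real \<Rightarrow> real" where
  "jensen_gap f a b = f a + f b - 2 * f ((a + b) / 2)"

lemma jensen_gap_commute: "jensen_gap f a b = jensen_gap f b a"
  unfolding jensen_gap_def by (simp add: add.commute)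

lemma jensen_gap_mvt:
  assumes "a < b" and f': "\<And>x. a \<le> x \<Longrightarrow> x \<le> b \<Longrightarrow> (f has_real_derivative f' x) (at x)"
  obtains z w where "a < z" "z < w" "w < b" "jensen_gap f a b = (b - a) / 2 * (f' w - f' z)"
proof -
  define m where "m = (a + b) / 2"
  have m: "a < m" "m < b" "b - m = (b - a) / 2" "m - a = (b - a) / 2"
    using \<open>a < b\<close> unfolding m_def by (auto simp: field_simps)
  obtain w where w: "m < w" "w < b" "f b - f m = (b - m) * f' w"
    using MVT2[OF m(2), of f f'] f' m by auto
  obtain z where z: "a < z" "z < m" "f m - f a = (m - a) * f' z"
    using MVT2[OF m(1), of f f'] f' m by auto
  have "jensen_gap f a b = (f b - f m) - (f m - f a)"
    unfolding jensen_gap_def m_def by simp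
  also have "\<dots> = (b - a) / 2 * (f' w - f' z)"
    unfolding w(3) z(3) m(3,4) by (simp add: right_diff_distrib)
  finally have "jensen_gap f a b = (b - a) / 2 * (f' w - f' z)" .
  with w z m show thesis by (intro that[of z w]) auto
qed

lemma jensen_gap_nonneg:
  assumes "0 < a" "0 < b"
    and f': "\<And>x. x > 0 \<Longrightarrow> (f has_real_derivative f' x) (at x)"
    and f'': "\<And>x. x > 0 \<Longrightarrow> (f' has_real_derivative f'' x) (at x)"
    and "\<And>x. x > 0 \<Longrightarrow> f'' x \<ge> 0"
  shows "jensen_gap f a b \<ge> 0"
proof -
  have "jensen_gap f a b \<ge> 0" if "0 < a" "a < b" for a b
  proof -
    obtain z w where zw: "a < z" "z < w" "w < b" "jensen_gap f a b = (b - a) / 2 * (f' w - f' z)"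
      using jensen_gap_mvt[OF \<open>a < b\<close>, of f f'] f' \<open>0 < a\<close> by auto
    have "f' z \<le> f' w"
    proof (rule DERIV_nonneg_imp_nondecreasing[of z w f'])
      fix x assume "z \<le> x" "x \<le> w"
      with zw \<open>0 < a\<close> have "x > 0" by simp
      with f'' assms(5) show "\<exists>y. (f' has_real_derivative y) (at x) \<and> y \<ge> 0" by blast
    qed (use zw in simp)
    then show ?thesis unfolding zw(4) using zw(3) \<open>a < b\<close> by simp
  qed
  from this[of a b] this[of b a] show ?thesis
    using assms(1,2) jensen_gap_commute[of f a b]
    by (cases a b rule: linorder_cases) (auto simp: jensen_gap_def)
qed

lemma jensen_gap_pos:
  assumes "0 < a" "0 < b" "a \<noteq> b"
    and f': "\<And>x. x > 0 \<Longrightarrow> (f has_real_derivative f' x) (at x)"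
    and f'': "\<And>x. x > 0 \<Longrightarrow> (f' has_real_derivative f'' x) (at x)"
    and "\<And>x. x > 0 \<Longrightarrow> f'' x > 0"
  shows "jensen_gap f a b > 0"
proof -
  have "jensen_gap f a b > 0" if "0 < a" "a < b" for a b
  proof -
    obtain z w where zw: "a < z" "z < w" "w < b" "jensen_gap f a b = (b - a) / 2 * (f' w - f' z)"
      using jensen_gap_mvt[OF \<open>a < b\<close>, of f f'] f' \<open>0 < a\<close> by auto
    have "f' z < f' w"
    proof (rule DERIV_pos_imp_increasing[of z w f'])
      fix x assume "z \<le> x" "x \<le> w"
      with zw \<open>0 < a\<close> have "x > 0" by simp
      with f'' assms(6) show "\<exists>y. (f' has_real_derivative y) (at x) \<and> y > 0" by blast
    qed (use zw in simp)
    then show ?thesis unfolding zw(4) using \<open>a < b\<close> by simp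
  qed
  from this[of a b] this[of b a] show ?thesis
    using assms(1-3) jensen_gap_commute[of f a b] by (cases a b rule: linorder_cases) auto
qed

definition powr_prim :: "real \<Rightarrow> real \<Rightarrow> real" where
  "powr_prim q x = (if q = -1 then ln x else x powr (q + 1) / (q + 1))"

definition powr_prim2 :: "real \<Rightarrow> real \<Rightarrow> real" where
  "powr_prim2 q x =
    (if q = -1 then x * ln x - x
     else if q = -2 then - ln x
     else x powr (q + 2) / ((q + 1) * (q + 2)))"

lemma has_real_derivative_powr_prim:
  assumes "x > 0"
  shows "(powr_prim q has_real_derivative x powr q) (at x)"
proof (cases "q = -1")
  case True
  have "(ln has_real_derivative 1 / x) (at x)"
    using assms by (auto intro!: derivative_eq_intros)
  then show ?thesis
    using True assms unfolding powr_prim_def by (simp add: powr_minus_divide)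
next
  case False
  then have "q + 1 \<noteq> 0" by simp
  have "((\<lambda>x. x powr (q + 1) / (q + 1)) has_real_derivative (q + 1) * x powr (q + 1 - 1) / (q + 1)) (at x)"
    using assms by (auto intro!: derivative_eq_intros)
  then show ?thesis
    using False \<open>q + 1 \<noteq> 0\<close> unfolding powr_prim_def by simp
qed

lemma has_real_derivative_powr_prim2:
  assumes "x > 0"
  shows "(powr_prim2 q has_real_derivative powr_prim q x) (at x)"
proof -
  consider "q = -1" | "q = -2" | "q \<noteq> -1" "q \<noteq> -2" by blast
  then show ?thesis
  proof cases
    case 1
    have "((\<lambda>x. x * ln x - x) has_real_derivative ln x) (at x)"
      using assms by (auto intro!: derivative_eq_intros)
    then show ?thesis
      using 1 unfolding powr_prim_def powr_prim2_def by simp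
  next
    case 2
    have "((\<lambda>x. - ln x) has_real_derivative - (1 / x)) (at x)"
      using assms by (auto intro!: derivative_eq_intros)
    then show ?thesis
      using 2 assms unfolding powr_prim_def powr_prim2_def by (simp add: powr_minus_divide)
  next
    case 3
    then have "q + 1 \<noteq> 0" "q + 2 \<noteq> 0" by auto
    have "((\<lambda>x. x powr (q + 2) / ((q + 1) * (q + 2))) has_real_derivative
          (q + 2) * x powr (q + 2 - 1) / ((q + 1) * (q + 2))) (at x)"
      using assms \<open>q + 1 \<noteq> 0\<close> \<open>q + 2 \<noteq> 0\<close> by (auto intro!: derivative_eq_intros)
    moreover have "(q + 2) * x powr (q + 2 - 1) / ((q + 1) * (q + 2)) = x powr (q + 1) / (q + 1)"
      using \<open>q + 2 \<noteq> 0\<close> by (simp add: add.commute diff_add_eq)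
    ultimately show ?thesis
      using 3 unfolding powr_prim_def powr_prim2_def by simp
  qed
qed

text \<open>
  The exceptional cases \<open>s \<in> {-1, 0, 1}\<close> of \<open>lam\<close> are those where \<open>powr_prim2 (s - 1)\<close> or
  \<open>powr_prim2 (s - 2)\<close> involves a logarithm.
\<close>
definition power_gap :: "real \<Rightarrow> real \<Rightarrow> real \<Rightarrow> real" where
  "power_gap q = jensen_gap (powr_prim2 q)"

lemma power_gap_pos: "0 < a \<Longrightarrow> 0 < b \<Longrightarrow> a \<noteq> b \<Longrightarrow> power_gap q a b > 0"
  unfolding power_gap_def
  by (rule jensen_gap_pos[OF _ _ _ has_real_derivative_powr_prim2 has_real_derivative_powr_prim]) auto

lemma power_gap_generic:
  assumes "q \<noteq> -1" "q \<noteq> -2"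
  shows "power_gap q a b = (a powr (q + 2) + b powr (q + 2) - 2 * ((a + b) / 2) powr (q + 2)) / ((q + 1) * (q + 2))"
  using assms unfolding power_gap_def jensen_gap_def powr_prim2_def
  by (simp add: diff_divide_distrib add_divide_distrib)

lemma lam_eq_power_gap_ratio:
  assumes "0 < a" "0 < b" "a \<noteq> b"
  shows "lam s a b = power_gap (s - 1) a b / power_gap (s - 2) a b"
proof -
  have "a + b > 0" using assms by simp
  consider "s = -1" | "s = 0" | "s = 1" | "s \<noteq> -1" "s \<noteq> 0" "s \<noteq> 1" by blast
  then show ?thesis
  proof cases
    case 1
    have recip: "powr_prim2 (-3) x = 1 / (2 * x)" if "x > 0" for x
      using that unfolding powr_prim2_def by (simp add: powr_minus_divide)
    have "4 / (2 * a + 2 * b) = 2 / (a + b)"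
      using \<open>a + b > 0\<close> by (simp add: field_simps)
    then have "power_gap (-3) a b = 1 / (2 * a) + 1 / (2 * b) - 2 / (a + b)"
      unfolding power_gap_def jensen_gap_def using assms by (simp add: recip)
    moreover have "power_gap (-2) a b = 2 * ln ((a + b) / 2) - ln a - ln b"
      unfolding power_gap_def jensen_gap_def powr_prim2_def by simp
    ultimately show ?thesis using 1 assms unfolding lam_def by simp
  next
    case 2
    have "power_gap (-1) a b = a * ln a + b * ln b - (a + b) * ln ((a + b) / 2)"
         "power_gap (-2) a b = 2 * ln ((a + b) / 2) - ln a - ln b"
      unfolding power_gap_def jensen_gap_def powr_prim2_def by (simp_all add: field_simps)
    then show ?thesis using 2 assms unfolding lam_def by simp
  next
    case 3
    have gaps: "power_gap 0 a b = (b - a)^2 / 4"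
         "power_gap (-1) a b = a * ln a + b * ln b - (a + b) * ln ((a + b) / 2)"
      using assms unfolding power_gap_def jensen_gap_def powr_prim2_def
      by (simp_all add: power2_eq_square field_simps)
    show ?thesis using 3 assms unfolding lam_def by (simp add: gaps)
  next
    case 4
    define N where "N = a powr (s + 1) + b powr (s + 1) - 2 * ((a + b) / 2) powr (s + 1)"
    define D where "D = a powr s + b powr s - 2 * ((a + b) / 2) powr s"
    have gaps: "power_gap (s - 1) a b = N / (s * (s + 1))" "power_gap (s - 2) a b = D / ((s - 1) * s)"
      using 4 power_gap_generic[of "s - 1" a b] power_gap_generic[of "s - 2" a b]
      unfolding N_def D_def by (simp_all add: algebra_simps)
    have "(N / (s * (s + 1))) / (D / ((s - 1) * s)) = ((s - 1) * N) / ((s + 1) * D) * (s / s)"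
      by (simp add: ac_simps)
    also have "\<dots> = (s - 1) / (s + 1) * (N / D)"
      using 4 by simp
    finally have "(N / (s * (s + 1))) / (D / ((s - 1) * s)) = (s - 1) / (s + 1) * (N / D)" .
    then show ?thesis using 4 assms unfolding gaps lam_def N_def D_def by simp
  qed
qed

lemma mult_diff_powr_diff_nonneg:
  fixes x c e :: real
  assumes "0 < x" "0 < c" "0 \<le> e"
  shows "0 \<le> (x - c) * (x powr e - c powr e)"
proof (cases "x \<le> c")
  case True
  then have "x powr e \<le> c powr e" using assms by (intro powr_mono2) auto
  then show ?thesis using True by (intro mult_nonpos_nonpos) auto
next
  case False
  then have "c powr e \<le> x powr e" using assms by (intro powr_mono2) auto
  then show ?thesis using False by (intro mult_nonneg_nonneg) auto
qed

text \<open>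
  With \<open>c = power_gap (q + 1) a b / power_gap q a b\<close> and \<open>e = r - q\<close>, the function
  \<open>x powr q * (x - c) * (x powr e - c powr e)\<close> is nonnegative; the Jensen gap of its second
  antiderivative is \<open>power_gap (r + 1) a b - c * power_gap r a b\<close>, because the two remaining terms
  cancel by the choice of \<open>c\<close>.
\<close>
lemma power_gap_ratio_mono:
  assumes ab: "0 < a" "0 < b" "a \<noteq> b" and "q \<le> r"
  shows "power_gap (q + 1) a b * power_gap r a b \<le> power_gap (r + 1) a b * power_gap q a b"
proof -
  have gap_q: "power_gap q a b > 0" using power_gap_pos ab by blast
  define c where "c = power_gap (q + 1) a b / power_gap q a b"
  have "c > 0" unfolding c_def using gap_q power_gap_pos[OF ab] by simp
  define e where "e = r - q"
  have "e \<ge> 0" unfolding e_def using \<open>q \<le> r\<close> by simp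
  define combine where
    "combine F = (\<lambda>x::real. F (r + 1) x - c * F r x - c powr e * F (q + 1) x + c powr (e + 1) * F q x)"
    for F :: "real \<Rightarrow> real \<Rightarrow> real"
  have d1: "(combine powr_prim2 has_real_derivative combine powr_prim x) (at x)" if "x > 0" for x
    unfolding combine_def using that
    by (intro DERIV_add DERIV_diff DERIV_cmult has_real_derivative_powr_prim2)
  have d2: "(combine powr_prim has_real_derivative combine (\<lambda>q x. x powr q) x) (at x)" if "x > 0" for x
    unfolding combine_def using that
    by (intro DERIV_add DERIV_diff DERIV_cmult has_real_derivative_powr_prim)
  have "combine (\<lambda>q x. x powr q) x = x powr q * ((x - c) * (x powr e - c powr e))" if "x > 0" for x
  proof -
    have "r = q + e" unfolding e_def by simp
    then show ?thesis
      using that \<open>c > 0\<close> unfolding combine_def by (simp add: powr_add algebra_simps)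
  qed
  then have "combine (\<lambda>q x. x powr q) x \<ge> 0" if "x > 0" for x
    using that mult_diff_powr_diff_nonneg[OF that \<open>c > 0\<close> \<open>e \<ge> 0\<close>] by simp
  then have "jensen_gap (combine powr_prim2) a b \<ge> 0"
    using jensen_gap_nonneg[OF ab(1,2) d1 d2] by blast
  moreover have "jensen_gap (combine powr_prim2) a b =
      power_gap (r + 1) a b - c * power_gap r a b - c powr e * (power_gap (q + 1) a b - c * power_gap q a b)"
    using \<open>c > 0\<close> unfolding combine_def jensen_gap_def power_gap_def
    by (simp add: powr_add algebra_simps)
  moreover have "power_gap (q + 1) a b - c * power_gap q a b = 0"
    unfolding c_def using gap_q by simp
  ultimately have "c * power_gap r a b \<le> power_gap (r + 1) a b" by simp
  then show ?thesis using gap_q unfolding c_def by (simp add: field_simps)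
qed

lemma lam_mono:
  assumes "s \<le> t" "0 < a" "0 < b"
  shows "lam s a b \<le> lam t a b"
proof (cases "a = b")
  case True
  then show ?thesis unfolding lam_def by simp
next
  case False
  have "power_gap (s - 1) a b * power_gap (t - 2) a b \<le> power_gap (t - 1) a b * power_gap (s - 2) a b"
    using power_gap_ratio_mono[OF assms(2,3) False, of "s - 2" "t - 2"] \<open>s \<le> t\<close>
    by (simp add: algebra_simps)
  moreover have "power_gap (s - 2) a b > 0" "power_gap (t - 2) a b > 0"
    using power_gap_pos[OF assms(2,3) False] by auto
  ultimately show ?thesis
    unfolding lam_eq_power_gap_ratio[OF assms(2,3) False] by (simp add: divide_simps)
qed

lemma quadratic_mean_bound:
  fixes u v :: real
  assumes "0 \<le> u" "0 \<le> v"
  shows "4 * (u + v) * sqrt ((u^2 + v^2) / 2) \<le> 3 * (u^2 + v^2) + 2 * u * v"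
proof (rule power2_le_imp_le)
  have "(4 * (u + v) * sqrt ((u^2 + v^2) / 2))^2 = 8 * (u + v)^2 * (u^2 + v^2)"
    by (simp add: power_mult_distrib power2_eq_square field_simps)
  also have "\<dots> = (3 * (u^2 + v^2) + 2 * u * v)^2 - (u - v)^4"
    by (simp add: power2_eq_square power4_eq_xxxx algebra_simps)
  finally show "(4 * (u + v) * sqrt ((u^2 + v^2) / 2))^2 \<le> (3 * (u^2 + v^2) + 2 * u * v)^2"
    by simp
qed (use assms in simp)

lemma G_le_lam_neg_half:
  assumes "0 < a" "0 < b"
  shows "G a b \<le> lam (-1/2) a b"
proof (cases "a = b")
  case True
  then show ?thesis using assms unfolding G_def lam_def by simp
next
  case False
  define u v w where "u = sqrt a" and "v = sqrt b" and "w = sqrt ((a + b) / 2)"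
  have "u > 0" "v > 0" "w > 0" using assms unfolding u_def v_def w_def by auto
  have w2: "w^2 = (u^2 + v^2) / 2" using assms unfolding u_def v_def w_def by simp
  have sqrt_powr: "x powr (1/2) = sqrt x" "x powr (-(1/2)) = 1 / sqrt x" if "x > 0" for x :: real
    using that by (simp_all add: powr_half_sqrt powr_minus_divide)
  have N: "power_gap (-3/2) a b = 8 * w - 4 * u - 4 * v"
    using power_gap_generic[of "-3/2" a b] assms unfolding u_def v_def w_def by (simp add: sqrt_powr)
  have D: "power_gap (-5/2) a b = 4/3 * (1/u + 1/v - 2/w)"
    using power_gap_generic[of "-5/2" a b] assms unfolding u_def v_def w_def by (simp add: sqrt_powr)
  have "power_gap (-3/2) a b - u * v * power_gap (-5/2) a b = 8 / (3 * w) * (3 * w^2 - 2 * (u + v) * w + u * v)"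
    unfolding N D using \<open>u > 0\<close> \<open>v > 0\<close> \<open>w > 0\<close> by (simp add: field_simps power2_eq_square)
  also have "\<dots> \<ge> 0"
  proof -
    have "w = sqrt ((u^2 + v^2) / 2)" using assms unfolding u_def v_def w_def by simp
    then have "4 * (u + v) * w \<le> 3 * (u^2 + v^2) + 2 * u * v"
      using quadratic_mean_bound[of u v] \<open>u > 0\<close> \<open>v > 0\<close> by simp
    then have "0 \<le> 3 * w^2 - 2 * (u + v) * w + u * v" unfolding w2 by (simp add: field_simps)
    then show ?thesis using \<open>w > 0\<close> by simp
  qed
  finally have "u * v * power_gap (-5/2) a b \<le> power_gap (-3/2) a b" by simp
  moreover have "G a b = u * v" unfolding G_def u_def v_def w_def by (simp add: real_sqrt_mult)
  moreover have "lam (-1/2) a b = power_gap (-3/2) a b / power_gap (-5/2) a b"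
    using lam_eq_power_gap_ratio[OF assms False, of "-1/2"] by simp
  ultimately show ?thesis
    using power_gap_pos[OF assms False, of "-5/2"] by (simp add: pos_le_divide_eq)
qed

lemma cosh_powr_cube:
  fixes y :: real
  shows "(cosh y powr (-1/3))^3 * cosh y = 1"
proof -
  have "(cosh y powr (-1/3))^3 = (cosh y powr (-1/3)) powr 3"
    by (subst powr_numeral) simp_all
  also have "\<dots> = 1 / cosh y"
    unfolding powr_powr by (simp add: powr_minus_divide)
  finally show ?thesis by simp
qed

lemma has_real_derivative_sinh_mult_cosh_powr:
  fixes y :: real
  defines "p \<equiv> cosh y powr (-1/3)"
  shows "((\<lambda>y. sinh y * cosh y powr (-1/3) - y) has_real_derivative (p^2 - 1)^2 * (p^2 + 2) / (3 * p^2)) (at y)"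
proof -
  have "p > 0" unfolding p_def by simp
  have C: "cosh y = 1 / p^3" using cosh_powr_cube[of y] \<open>p > 0\<close> unfolding p_def by (simp add: field_simps)
  have "((\<lambda>y. cosh y powr (-1/3)) has_real_derivative (-1/3) * cosh y powr (-1/3 - of_nat 1) * sinh y) (at y)"
    by (rule DERIV_fun_powr) (auto intro!: derivative_eq_intros)
  moreover have "cosh y powr (-1/3 - of_nat 1) = p / cosh y"
    unfolding p_def by (simp only: of_nat_1 powr_diff) simp
  ultimately have "((\<lambda>y. sinh y * cosh y powr (-1/3) - y) has_real_derivative
      cosh y * p + sinh y * ((-1/3) * (p / cosh y) * sinh y) - 1) (at y)"
    unfolding p_def by (auto intro!: derivative_eq_intros)
  moreover have "cosh y * p + sinh y * ((-1/3) * (p / cosh y) * sinh y) - 1 = (p^2 - 1)^2 * (p^2 + 2) / (3 * p^2)"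
  proof -
    have "sinh y * ((-1/3) * (p / cosh y) * sinh y) = - (sinh y ^ 2) * p / (3 * cosh y)"
      by (simp add: power2_eq_square)
    also have "\<dots> = - (cosh y ^ 2 - 1) * p / (3 * cosh y)"
      unfolding sinh_square_eq ..
    finally have S: "sinh y * ((-1/3) * (p / cosh y) * sinh y) = - (cosh y ^ 2 - 1) * p / (3 * cosh y)" .
    show ?thesis
      unfolding S unfolding C using \<open>p > 0\<close> by (simp add: field_simps power2_eq_square power3_eq_cube power4_eq_xxxx)
  qed
  ultimately show ?thesis by simp
qed

lemma lazarevic_inequality:
  fixes y :: real
  assumes "y \<ge> 0"
  shows "y^3 * cosh y \<le> sinh y ^ 3"
proof -
  define K :: "real \<Rightarrow> real" where "K y = sinh y * cosh y powr (-1/3) - y" for y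
  have "K 0 \<le> K y"
    using DERIV_nonneg_imp_nondecreasing[OF assms, of K] has_real_derivative_sinh_mult_cosh_powr
    unfolding K_def by force
  define p where "p = cosh y powr (-1/3)"
  then have "y \<le> sinh y * p" using \<open>K 0 \<le> K y\<close> unfolding K_def by simp
  then have "y^3 * cosh y \<le> (sinh y * p)^3 * cosh y"
    using assms by (intro mult_right_mono power_mono) auto
  also have "\<dots> = sinh y ^ 3" using cosh_powr_cube[of y] unfolding p_def by (simp add: power_mult_distrib)
  finally show ?thesis .
qed

lemma has_real_derivative_ln_cosh_gap:
  fixes y :: real
  assumes "y > 0"
  shows "((\<lambda>y. ln (cosh y) - y^2 * sinh y / (sinh y + y * cosh y)) has_real_derivative
           (sinh y ^ 3 - y^3 * cosh y) / (cosh y * (sinh y + y * cosh y)^2)) (at y)"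
proof -
  define D where "D = sinh y + y * cosh y"
  define N' where "N' = (2 * y * sinh y + y^2 * cosh y) * D - y^2 * sinh y * (2 * cosh y + y * sinh y)"
  have "D > 0" unfolding D_def using assms by (simp add: add_pos_pos)
  have "((\<lambda>y. ln (cosh y) - y^2 * sinh y / (sinh y + y * cosh y)) has_real_derivative
      sinh y / cosh y - N' / D^2) (at y)"
    unfolding N'_def D_def
    by (rule derivative_eq_intros refl | use \<open>D > 0\<close> in \<open>simp add: D_def; fail\<close>)+
      (use \<open>D > 0\<close> in \<open>simp add: D_def power2_eq_square algebra_simps\<close>)
  moreover have "sinh y / cosh y - N' / D^2 = (sinh y * D^2 - cosh y * N') / (cosh y * D^2)"
    using \<open>D > 0\<close> by (simp add: field_simps)
  moreover have "sinh y * D^2 - cosh y * N' = sinh y ^ 3 - y^3 * cosh y * (cosh y^2 - sinh y^2)"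
    unfolding N'_def D_def by algebra
  ultimately show ?thesis unfolding D_def hyperbolic_pythagoras by simp
qed

lemma ln_cosh_bound:
  fixes y :: real
  assumes "y > 0"
  shows "y^2 * sinh y \<le> ln (cosh y) * (sinh y + y * cosh y)"
proof -
  define f :: "real \<Rightarrow> real" where "f y = ln (cosh y) - y^2 * sinh y / (sinh y + y * cosh y)" for y
  have mono: "f x \<le> f y" if "0 < x" "x \<le> y" for x
  proof (rule DERIV_nonneg_imp_nondecreasing[OF \<open>x \<le> y\<close>])
    fix z assume "x \<le> z" "z \<le> y"
    with \<open>0 < x\<close> have "z > 0" by simp
    then have "(sinh z ^ 3 - z^3 * cosh z) / (cosh z * (sinh z + z * cosh z)^2) \<ge> 0"
      using lazarevic_inequality[of z] add_pos_pos[of "sinh z" "z * cosh z"]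
      by (intro divide_nonneg_pos) auto
    with has_real_derivative_ln_cosh_gap[OF \<open>z > 0\<close>]
    show "\<exists>d. (f has_real_derivative d) (at z) \<and> d \<ge> 0"
      unfolding f_def[abs_def] by blast
  qed
  have "eventually (\<lambda>x. f x \<le> f y) (at_right 0)"
    using eventually_at_right_real[OF assms] by eventually_elim (auto intro: mono)
  moreover have "(f \<longlongrightarrow> 0) (at_right 0)"
    unfolding f_def by real_asymp
  ultimately have "0 \<le> f y"
    using tendsto_upperbound by fastforce
  moreover have "sinh y + y * cosh y > 0" using assms by (intro add_pos_pos) auto
  ultimately show ?thesis unfolding f_def by (simp add: field_simps)
qed

lemma lam_commute: "lam s a b = lam s b a"
  unfolding lam_def by (simp add: ac_simps power2_commute)

lemma L_commute: "L a b = L b a"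
proof -
  have "(b - a) / (ln b - ln a) = (a - b) / (ln a - ln b)"
    using minus_divide_divide[of "a - b" "ln a - ln b"] by simp
  then show ?thesis unfolding L_def by auto
qed

lemma lam_zero_exp:
  assumes "g > 0" "y > 0"
  shows "lam 0 (g * exp (-y)) (g * exp y) = g * (y * sinh y - cosh y * ln (cosh y)) / ln (cosh y)"
proof -
  define a b where "a = g * exp (-y)" and "b = g * exp y"
  have "a \<noteq> b" unfolding a_def b_def using assms by simp
  have mid: "(a + b) / 2 = g * cosh y" and diff: "b - a = 2 * g * sinh y"
    unfolding a_def b_def cosh_field_def sinh_field_def by (simp_all add: field_simps)
  have logs: "ln a = ln g - y" "ln b = ln g + y" "ln ((a + b) / 2) = ln g + ln (cosh y)"
    unfolding mid unfolding a_def b_def using assms by (simp_all add: ln_mult)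
  have "a * ln a + b * ln b - (a + b) * ln ((a + b) / 2) = y * (b - a) - (a + b) * ln (cosh y)"
    unfolding logs by (simp add: algebra_simps)
  also have "\<dots> = 2 * g * (y * sinh y - cosh y * ln (cosh y))"
    using mid diff by (simp add: algebra_simps)
  finally have "lam 0 a b = 2 * g * (y * sinh y - cosh y * ln (cosh y)) / (2 * ln (cosh y))"
    using \<open>a \<noteq> b\<close> unfolding lam_def logs by simp
  then show ?thesis unfolding a_def b_def by simp
qed

lemma L_exp:
  assumes "g > 0" "y > 0"
  shows "L (g * exp (-y)) (g * exp y) = g * sinh y / y"
  using assms unfolding L_def sinh_field_def by (simp add: ln_mult field_simps)

lemma exp_parametrization:
  fixes a b :: real
  assumes "0 < a" "a < b"
  obtains g y where "g > 0" "y > 0" "a = g * exp (-y)" "b = g * exp y"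
proof
  define g y where "g = sqrt (a * b)" and "y = (ln b - ln a) / 2"
  show "g > 0" "y > 0" unfolding g_def y_def using assms by auto
  have "ln g = (ln a + ln b) / 2" unfolding g_def using assms by (simp add: ln_sqrt ln_mult)
  then have "ln g + -y = ln a" "ln g + y = ln b" unfolding y_def by (simp_all add: field_simps)
  moreover have "g * exp t = exp (ln g + t)" for t using \<open>g > 0\<close> by (simp add: exp_add)
  ultimately show "a = g * exp (-y)" "b = g * exp y" using assms by simp_all
qed

lemma lam_zero_le_L:
  assumes "0 < a" "0 < b"
  shows "lam 0 a b \<le> L a b"
proof -
  have "lam 0 a b \<le> L a b" if "0 < a" "a < b" for a b
  proof -
    obtain g y where "g > 0" "y > 0" and ab: "a = g * exp (-y)" "b = g * exp y"
      using exp_parametrization \<open>0 < a\<close> \<open>a < b\<close> by blast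
    have "ln (cosh y) > 0" using \<open>y > 0\<close> cosh_real_nonneg_less_iff[of 0 y] by simp
    have "y * (y * sinh y - cosh y * ln (cosh y)) \<le> sinh y * ln (cosh y)"
      using ln_cosh_bound[OF \<open>y > 0\<close>] by (simp add: power2_eq_square algebra_simps)
    then have "(y * sinh y - cosh y * ln (cosh y)) / ln (cosh y) \<le> sinh y / y"
      using \<open>ln (cosh y) > 0\<close> \<open>y > 0\<close> by (simp add: field_simps)
    then have "g * ((y * sinh y - cosh y * ln (cosh y)) / ln (cosh y)) \<le> g * (sinh y / y)"
      using \<open>g > 0\<close> by (intro mult_left_mono) auto
    then show ?thesis unfolding ab lam_zero_exp[OF \<open>g > 0\<close> \<open>y > 0\<close>] L_exp[OF \<open>g > 0\<close> \<open>y > 0\<close>]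
      by simp
  qed
  from this[of a b] this[of b a] show ?thesis
    using assms lam_commute[of 0 a b] L_commute[of a b]
    by (cases a b rule: linorder_cases) (auto simp: lam_def L_def)
qed

lemma lam_generic:
  assumes "a \<noteq> b" "s \<noteq> -1" "s \<noteq> 0" "s \<noteq> 1"
  shows "lam s a b = (s - 1) / (s + 1) *
    ((a powr (s + 1) + b powr (s + 1) - 2 * ((a + b) / 2) powr (s + 1)) /
     (a powr s + b powr s - 2 * ((a + b) / 2) powr s))"
  using assms unfolding lam_def by simp

lemma eventually_at_right_0_witness:
  assumes "eventually P (at_right (0::real))"
  obtains u where "0 < u" "u < 1" "P u"
proof -
  have "eventually (\<lambda>u. u \<in> {0<..<1} \<and> P u) (at_right (0::real))"
    using eventually_conj[OF eventually_at_right_real[of 0 1] assms] by simp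
  then show thesis using eventually_happens'[of "at_right (0::real)"] that by force
qed

lemma lam_div_sqrt_tendsto_zero:
  assumes "s < -1/2"
  shows "((\<lambda>u. lam s u 1 / sqrt u) \<longlongrightarrow> 0) (at_right 0)"
proof (cases "s = -1")
  case True
  have "((\<lambda>u::real. (2 * ln ((u + 1) / 2) - ln u - ln 1) / (1 / (2 * u) + 1 / (2 * 1) - 2 / (u + 1)) / sqrt u)
      \<longlongrightarrow> 0) (at_right 0)"
    by real_asymp
  moreover have "\<forall>\<^sub>F u in at_right 0.
      (2 * ln ((u + 1) / 2) - ln u - ln 1) / (1 / (2 * u) + 1 / (2 * 1) - 2 / (u + 1)) / sqrt u = lam s u 1 / sqrt u"
    using eventually_at_right_real[of 0 "1::real"] by (auto elim!: eventually_mono simp: lam_def True add.commute)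
  ultimately show ?thesis by (rule Lim_transform_eventually)
next
  case False
  define R where "R u = (u powr (s + 1) + 1 powr (s + 1) - 2 * ((u + 1) / 2) powr (s + 1)) /
                        (u powr s + 1 powr s - 2 * ((u + 1) / 2) powr s)" for u :: real
  have "((\<lambda>u. R u / sqrt u) \<longlongrightarrow> 0) (at_right 0)"
  proof (cases "s < -1")
    case True
    then show ?thesis unfolding R_def by real_asymp
  next
    case False
    with \<open>s \<noteq> -1\<close> assms have "-1 < s" "s < -1/2" by auto
    then show ?thesis unfolding R_def by real_asymp
  qed
  then have "((\<lambda>u. (s - 1) / (s + 1) * (R u / sqrt u)) \<longlongrightarrow> 0) (at_right 0)"
    by (rule tendsto_mult_right_zero)
  moreover have "(s - 1) / (s + 1) * (R u / sqrt u) = lam s u 1 / sqrt u" if "u < 1" for u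
    using that assms False unfolding R_def by (subst lam_generic) auto
  then have "\<forall>\<^sub>F u in at_right 0. (s - 1) / (s + 1) * (R u / sqrt u) = lam s u 1 / sqrt u"
    using eventually_at_right_real[of 0 "1::real"] by (auto elim!: eventually_mono)
  ultimately show ?thesis by (rule Lim_transform_eventually)
qed

lemma lam_lt_G_somewhere:
  assumes "s < -1/2"
  obtains a b where "0 < a" "0 < b" "lam s a b < G a b"
proof -
  have "\<forall>\<^sub>F u in at_right 0. lam s u 1 / sqrt u < 1"
    using order_tendstoD(2)[OF lam_div_sqrt_tendsto_zero[OF assms]] by simp
  then obtain u where "0 < u" "lam s u 1 / sqrt u < 1"
    using eventually_at_right_0_witness by blast
  then have "lam s u 1 < G u 1" unfolding G_def by (simp add: divide_less_eq)
  with \<open>0 < u\<close> show thesis using that[of u 1] by simp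
qed

lemma lam_one_at_one_tendsto: "((\<lambda>u. lam 1 u 1) \<longlongrightarrow> 1 / (4 * ln 2)) (at_right 0)"
proof -
  have "((\<lambda>u::real. (1 - u)^2 / (4 * (u * ln u + 1 * ln 1 - (u + 1) * ln ((u + 1) / 2))))
      \<longlongrightarrow> - inverse (ln (1/2)) / 4) (at_right 0)"
    by real_asymp
  moreover have "- inverse (ln (1/2)) / 4 = 1 / (4 * ln (2::real))"
    by (simp add: ln_div inverse_eq_divide)
  moreover have "\<forall>\<^sub>F u in at_right 0.
      (1 - u)^2 / (4 * (u * ln u + 1 * ln 1 - (u + 1) * ln ((u + 1) / 2))) = lam 1 u 1"
    using eventually_at_right_real[of 0 "1::real"]
    by (auto elim!: eventually_mono simp: lam_def add.commute power2_commute)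
  ultimately show ?thesis
    by (auto intro: Lim_transform_eventually)
qed

lemma lam_at_one_tendsto:
  assumes "s > 0" "s \<noteq> 1"
  shows "((\<lambda>u. lam s u 1) \<longlongrightarrow> (s - 1) / (s + 1) * ((1 - (1/2) powr s) / (1 - 2 * (1/2) powr s))) (at_right 0)"
proof -
  define R where "R u = (s - 1) / (s + 1) * ((u powr (s + 1) + 1 powr (s + 1) - 2 * ((u + 1) / 2) powr (s + 1)) /
    (u powr s + 1 powr s - 2 * ((u + 1) / 2) powr s))" for u :: real
  have "(1/2::real) powr s \<noteq> 1/2"
    using assms powr_inj[of "1/2::real" s 1] by auto
  have powr_0: "((\<lambda>u. u powr c) \<longlongrightarrow> 0) (at_right 0)" if "c > 0" for c :: real
    using that by real_asymp
  have "(R \<longlongrightarrow> (s - 1) / (s + 1) * ((0 + 1 powr (s + 1) - 2 * ((0 + 1) / 2) powr (s + 1)) /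
      (0 + 1 powr s - 2 * ((0 + 1) / 2) powr s))) (at_right 0)"
    unfolding R_def
  proof (intro tendsto_intros powr_0)
    show "0 + 1 powr s - 2 * ((0 + 1) / 2) powr s \<noteq> (0::real)"
      using \<open>(1/2::real) powr s \<noteq> 1/2\<close> by simp
  qed (use \<open>s > 0\<close> in auto)
  moreover have "R u = lam s u 1" if "u < 1" for u
    using that assms unfolding R_def by (subst lam_generic) auto
  then have "\<forall>\<^sub>F u in at_right 0. R u = lam s u 1"
    using eventually_at_right_real[of 0 "1::real"] by (auto elim!: eventually_mono)
  ultimately show ?thesis
    by (auto simp: powr_add intro: Lim_transform_eventually)
qed

lemma lam_at_one_limit_pos:
  fixes s :: real
  assumes "s > 0" "s \<noteq> 1"
  shows "(s - 1) / (s + 1) * ((1 - (1/2) powr s) / (1 - 2 * (1/2) powr s)) > 0"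
proof -
  have "(s - 1) * (1 - 2 powr (1 - s)) > 0"
  proof (cases "s < 1")
    case True
    then have "2 powr 0 < 2 powr (1 - s)" by (intro powr_less_mono) auto
    then show ?thesis using True by (simp add: mult_neg_neg)
  next
    case False
    with \<open>s \<noteq> 1\<close> have "2 powr (1 - s) < 2 powr 0" by (intro powr_less_mono) auto
    then show ?thesis using False \<open>s \<noteq> 1\<close> by simp
  qed
  moreover have "2 * (1/2) powr s = 2 powr (1 - s)" by (simp add: powr_diff powr_divide)
  ultimately have "(s - 1) / (1 - 2 * (1/2) powr s) > 0"
    by (simp add: zero_less_divide_iff zero_less_mult_iff)
  moreover have "(1 - (1/2) powr s) / (s + 1) > 0"
    using powr_less_mono2[of s "1/2" 1] assms by simp
  ultimately have "(s - 1) / (1 - 2 * (1/2) powr s) * ((1 - (1/2) powr s) / (s + 1)) > 0"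
    by (rule mult_pos_pos)
  then show ?thesis by (simp add: field_simps)
qed

lemma lam_at_one_tendsto_pos:
  assumes "s > 0"
  obtains K where "K > 0" "((\<lambda>u. lam s u 1) \<longlongrightarrow> K) (at_right 0)"
proof (cases "s = 1")
  case True
  then show thesis using that[of "1 / (4 * ln 2)"] lam_one_at_one_tendsto by simp
next
  case False
  then show thesis using that lam_at_one_tendsto lam_at_one_limit_pos assms by blast
qed

lemma L_lt_lam_somewhere:
  assumes "s > 0"
  obtains a b where "0 < a" "0 < b" "L a b < lam s a b"
proof -
  obtain K where "K > 0" and lam_lim: "((\<lambda>u. lam s u 1) \<longlongrightarrow> K) (at_right 0)"
    using lam_at_one_tendsto_pos[OF assms] .
  have "((\<lambda>u::real. (1 - u) / (ln 1 - ln u)) \<longlongrightarrow> 0) (at_right 0)"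
    by real_asymp
  from order_tendstoD(2)[OF this, of "K / 2"] order_tendstoD(1)[OF lam_lim, of "K / 2"] \<open>K > 0\<close>
  have "\<forall>\<^sub>F u in at_right 0. (1 - u) / (ln 1 - ln u) < K / 2 \<and> K / 2 < lam s u 1"
    by (simp add: eventually_conj)
  then obtain u where "0 < u" "u < 1" "(1 - u) / (ln 1 - ln u) < K / 2" "K / 2 < lam s u 1"
    using eventually_at_right_0_witness by blast
  moreover have "L u 1 = (1 - u) / (ln 1 - ln u)" unfolding L_def using \<open>u < 1\<close> by simp
  ultimately have "L u 1 < lam s u 1" by linarith
  with \<open>0 < u\<close> show thesis using that[of u 1] by simp
qed

theorem theorem3:
  shows "(\<forall>s a b. -1/2 \<le> s \<and> s \<le> 0 \<and> 0 < a \<and> 0 < b \<longrightarrow>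
            G a b \<le> lam s a b \<and> lam s a b \<le> L a b)
       \<and> (\<forall>s. (\<forall>a b. 0 < a \<and> 0 < b \<longrightarrow> G a b \<le> lam s a b) \<longleftrightarrow> s \<ge> -1/2)
       \<and> (\<forall>s. (\<forall>a b. 0 < a \<and> 0 < b \<longrightarrow> lam s a b \<le> L a b) \<longleftrightarrow> s \<le> 0)"
proof -
  have lower: "G a b \<le> lam s a b" if "-1/2 \<le> s" "0 < a" "0 < b" for s a b
    using G_le_lam_neg_half[OF that(2,3)] lam_mono[OF that] by linarith
  have upper: "lam s a b \<le> L a b" if "s \<le> 0" "0 < a" "0 < b" for s a b
    using lam_zero_le_L[OF that(2,3)] lam_mono[OF that] by linarith
  have "\<not> (\<forall>a b. 0 < a \<and> 0 < b \<longrightarrow> G a b \<le> lam s a b)" if "s < -1/2" for s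
    using lam_lt_G_somewhere[OF that] by (metis not_le)
  moreover have "\<not> (\<forall>a b. 0 < a \<and> 0 < b \<longrightarrow> lam s a b \<le> L a b)" if "s > 0" for s
    using L_lt_lam_somewhere[OF that] by (metis not_le)
  ultimately show ?thesis using lower upper by (meson not_le)
qed

end
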